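(* Let $H$ be a separable infinite-dimensional complex Hilbert space, let $R>1$ and $B_R=\{T\in L(H):\|T\|\le R\}$. Given $x\in H\setminus\{0\}$, the set $L_{HC}(x)$ of operators $T\in B_R$ for which $x$ is a hypercyclic vector is a dense $G_\delta$ subset of $B_R$ equipped with the strong operator topology.
   Context: $x$ is hypercyclic for $T$ if the orbit $\{x,Tx,T^2x,\dots\}$ is norm-dense in $H$. *)

theory Defs
  imports "HOL-Analysis.Analysis"
begin

text \<open>A complex Hilbert space is modelled as a real Hilbert space (real_inner + complete_space)
  equipped with an orthogonal complex structure J (J models multiplication by the imaginary unit).\<close>

definition complex_structure :: "('a::real_inner \<Rightarrow> 'a) \<Rightarrow> bool" where
  "complex_structure J \<longleftrightarrow> linear J \<and> (\<forall>v. J (J v) = - v) \<and> (\<forall>u v. inner (J u) (J v) = inner u v)"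

text \<open>Bounded complex-linear operators: bounded (real-)linear operators commuting with J.\<close>
definition complex_ops :: "('a::real_inner \<Rightarrow> 'a) \<Rightarrow> ('a \<Rightarrow>\<^sub>L 'a) set" where
  "complex_ops J = {T. \<forall>v. blinfun_apply T (J v) = J (blinfun_apply T v)}"

definition op_ball :: "('a::real_inner \<Rightarrow> 'a) \<Rightarrow> real \<Rightarrow> ('a \<Rightarrow>\<^sub>L 'a) set" where
  "op_ball J R = {T \<in> complex_ops J. norm T \<le> R}"

text \<open>Strong operator topology on a set A of operators: the topology of pointwise norm convergence
  (pullback of the product topology on functions).\<close>
definition sot_on :: "('a::real_normed_vector \<Rightarrow>\<^sub>L 'a) set \<Rightarrow> ('a \<Rightarrow>\<^sub>L 'a) topology" where
  "sot_on A = pullback_topology A blinfun_apply euclidean"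

definition hypercyclic :: "('a::real_normed_vector \<Rightarrow>\<^sub>L 'a) \<Rightarrow> 'a \<Rightarrow> bool" where
  "hypercyclic T x \<longleftrightarrow> closure (range (\<lambda>n. (blinfun_apply T ^^ n) x)) = UNIV"

definition L_HC :: "('a::real_inner \<Rightarrow> 'a) \<Rightarrow> real \<Rightarrow> 'a \<Rightarrow> ('a \<Rightarrow>\<^sub>L 'a) set" where
  "L_HC J R x = {T \<in> op_ball J R. hypercyclic T x}"

end

theory Submission
  imports Defs
begin

text \<open>Fix a dense sequence d. Then L_HC J R x is the intersection, over k and j, of the sets
  of T in B_R some iterate of which maps x to within 1/(j+1) of d k. On the norm-bounded set B_R
  the strong operator topology is completely metrizable, so by Baire's theorem it suffices that
  each of these countably many sets is open, which holds because T^n x depends continuously on T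
  there, and dense. Density is where infinite dimension enters: every T0 in B_R can be changed,
  only slightly on a given finite set of vectors, into an operator in B_R that maps x exactly to
  a prescribed vector after finitely many steps.\<close>

section \<open>Complex structures and orthonormal systems\<close>

locale complex_space =
  fixes J :: "'a::{real_inner,complete_space} \<Rightarrow> 'a"
  assumes complex_structure: "complex_structure J"
begin

lemma linear_J: "linear J"
  using complex_structure by (simp add: complex_structure_def)

lemma J_J [simp]: "J (J v) = - v"
  using complex_structure by (simp add: complex_structure_def)

lemma inner_J_J [simp]: "inner (J u) (J v) = inner u v"
  using complex_structure by (simp add: complex_structure_def)

lemma norm_J [simp]: "norm (J v) = norm v"
  by (simp add: norm_eq_sqrt_inner)

lemma bounded_linear_J: "bounded_linear J"
  using linear_J by (auto intro!: bounded_linear_intro[where K=1] simp: linear_add linear_scale)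

sublocale J: bounded_linear J
  by (rule bounded_linear_J)

lemma inner_J_left: "inner (J u) v = - inner u (J v)"
  using inner_J_J[of "J u" v] by (simp del: inner_J_J)

lemma inner_J_self [simp]: "inner u (J u) = 0" "inner (J u) u = 0"
  using inner_J_left[of u u] by (simp_all add: inner_commute)

end

definition orthonormal_on :: "'i set \<Rightarrow> ('i \<Rightarrow> 'a::real_inner) \<Rightarrow> bool" where
  "orthonormal_on I b \<longleftrightarrow> (\<forall>i\<in>I. \<forall>j\<in>I. inner (b i) (b j) = (if i = j then 1 else 0))"

lemma orthonormal_on_subset: "orthonormal_on I b \<Longrightarrow> K \<subseteq> I \<Longrightarrow> orthonormal_on K b"
  unfolding orthonormal_on_def by blast

lemma inner_sum_orthonormal_on:
  assumes "orthonormal_on I b" "finite I" "j \<in> I"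
  shows "inner (\<Sum>i\<in>I. f i *\<^sub>R b i) (b j) = f j"
proof -
  have "inner (\<Sum>i\<in>I. f i *\<^sub>R b i) (b j) = (\<Sum>i\<in>I. f i * inner (b i) (b j))"
    by (simp add: inner_sum_left)
  also have "\<dots> = (\<Sum>i\<in>I. if i = j then f i else 0)"
    using assms(1,3) by (intro sum.cong) (auto simp: orthonormal_on_def)
  also have "\<dots> = f j"
    using assms by simp
  finally show ?thesis .
qed

lemma inner_sums_orthonormal_on:
  assumes "orthonormal_on I b" "finite I"
  shows "inner (\<Sum>i\<in>I. f i *\<^sub>R b i) (\<Sum>j\<in>I. g j *\<^sub>R b j) = (\<Sum>i\<in>I. f i * g i)"
  using assms by (simp add: inner_sum_right inner_sum_orthonormal_on mult.commute)

lemma norm_sum_orthonormal_on: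
  assumes "orthonormal_on I b" "finite I"
  shows "(norm (\<Sum>i\<in>I. f i *\<^sub>R b i))\<^sup>2 = (\<Sum>i\<in>I. (f i)\<^sup>2)"
  using inner_sums_orthonormal_on[OF assms, of f f]
  by (simp add: power2_norm_eq_inner power2_eq_square[symmetric])

lemma bessel_inequality:
  assumes "orthonormal_on I b" "finite I"
  shows "(\<Sum>i\<in>I. (inner z (b i))\<^sup>2) \<le> (norm z)\<^sup>2"
proof -
  define p where "p = (\<Sum>i\<in>I. inner z (b i) *\<^sub>R b i)"
  have zp: "inner z p = (\<Sum>i\<in>I. (inner z (b i))\<^sup>2)"
    by (simp add: p_def inner_sum_right power2_eq_square)
  have pp: "inner p p = (\<Sum>i\<in>I. (inner z (b i))\<^sup>2)"
    unfolding p_def using inner_sums_orthonormal_on[OF assms] by (simp add: power2_eq_square)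
  have "0 \<le> inner (z - p) (z - p)"
    by simp
  also have "\<dots> = inner z z - 2 * inner z p + inner p p"
    by (simp add: inner_diff_left inner_diff_right inner_commute)
  finally show ?thesis
    using zp pp by (simp add: power2_norm_eq_inner)
qed

definition orthonormal_set :: "'a::real_inner set \<Rightarrow> bool" where
  "orthonormal_set E \<longleftrightarrow> finite E \<and> orthonormal_on E (\<lambda>e. e)"

definition orth_proj :: "'a::real_inner set \<Rightarrow> 'a \<Rightarrow> 'a" where
  "orth_proj E z = (\<Sum>e\<in>E. inner z e *\<^sub>R e)"

lemma orth_proj_in_span: "orth_proj E z \<in> span E"
  unfolding orth_proj_def by (intro span_sum span_mul span_base)

lemma bounded_linear_orth_proj: "bounded_linear (orth_proj E)"
  unfolding orth_proj_def
  by (intro bounded_linear_sum bounded_linear_compose[OF bounded_linear_scaleR_left bounded_linear_inner_left])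

lemma inner_orth_proj: "orthonormal_set E \<Longrightarrow> e \<in> E \<Longrightarrow> inner (orth_proj E z) e = inner z e"
  unfolding orth_proj_def orthonormal_set_def
  using inner_sum_orthonormal_on[of E "\<lambda>e. e" e "\<lambda>e. inner z e"] by auto

lemma orthogonal_orth_proj_span:
  assumes "orthonormal_set E" "g \<in> span E"
  shows "inner (z - orth_proj E z) g = 0"
proof -
  have "orthogonal (z - orth_proj E z) g"
    using assms(2) by (rule orthogonal_to_span)
      (use inner_orth_proj[OF assms(1)] in \<open>simp add: orthogonal_def inner_diff_left\<close>)
  then show ?thesis
    by (simp add: orthogonal_def)
qed

lemma orth_proj_unique:
  assumes "orthonormal_set E" "p \<in> span E" "\<And>g. g \<in> span E \<Longrightarrow> inner (z - p) g = 0"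
  shows "orth_proj E z = p"
proof -
  let ?d = "orth_proj E z - p"
  have d: "?d \<in> span E"
    using assms(2) orth_proj_in_span span_diff by blast
  have "?d = (z - p) - (z - orth_proj E z)"
    by simp
  then have "inner ?d ?d = inner (z - p) ?d - inner (z - orth_proj E z) ?d"
    by (metis inner_diff_left)
  also have "\<dots> = 0"
    using assms(3)[OF d] orthogonal_orth_proj_span[OF assms(1) d] by simp
  finally show ?thesis
    by simp
qed

lemma orth_proj_id: "orthonormal_set E \<Longrightarrow> g \<in> span E \<Longrightarrow> orth_proj E g = g"
  by (rule orth_proj_unique) auto

lemma orth_proj_pythagoras:
  assumes "orthonormal_set E"
  shows "(norm z)\<^sup>2 = (norm (orth_proj E z))\<^sup>2 + (norm (z - orth_proj E z))\<^sup>2"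
proof -
  have "orthogonal (orth_proj E z) (z - orth_proj E z)"
    using orthogonal_orth_proj_span[OF assms orth_proj_in_span]
    by (simp add: orthogonal_def inner_commute)
  then show ?thesis
    using norm_add_Pythagorean by fastforce
qed

lemma norm_orth_proj_le: "orthonormal_set E \<Longrightarrow> norm (orth_proj E z) \<le> norm z"
  using orth_proj_pythagoras[of E z] by (metis le_add_same_cancel1 power2_le_imp_le zero_le_power2 norm_ge_zero)

lemma orthonormal_basis_of_span:
  fixes S :: "'a::real_inner set"
  assumes "finite S"
  obtains E where "orthonormal_set E" "span E = span S"
proof -
  obtain C where C: "finite C" "span C = span S" "pairwise orthogonal C"
    using basis_orthogonal[OF assms] by blast
  define E where "E = (\<lambda>c. inverse (norm c) *\<^sub>R c) ` (C - {0})"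
  have unit: "norm e = 1" if "e \<in> E" for e
    using that by (auto simp: E_def field_simps split: if_splits)
  have "orthonormal_on E (\<lambda>e. e)"
    unfolding orthonormal_on_def
  proof (intro ballI)
    fix e e' assume e: "e \<in> E" and e': "e' \<in> E"
    then obtain c c' where c: "c \<in> C" "e = inverse (norm c) *\<^sub>R c"
      and c': "c' \<in> C" "e' = inverse (norm c') *\<^sub>R c'"
      by (auto simp: E_def)
    show "inner e e' = (if e = e' then 1 else 0)"
    proof (cases "c = c'")
      case True
      then show ?thesis
        using unit[OF e] c c' by (simp add: power2_norm_eq_inner[symmetric])
    next
      case False
      then have "inner e e' = 0"
        using C(3) c c' by (auto simp: pairwise_def orthogonal_def)
      moreover have "inner e e = 1"
        using unit[OF e] by (simp add: power2_norm_eq_inner[symmetric])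
      ultimately show ?thesis
        by auto
    qed
  qed
  moreover have "span E = span S"
    unfolding E_def using C(1,2) by (subst span_image_scale) auto
  moreover have "finite E"
    using C(1) by (simp add: E_def)
  ultimately show ?thesis
    using that by (simp add: orthonormal_set_def)
qed

lemma exists_unit_orthogonal:
  fixes S :: "'a::real_inner set"
  assumes "\<forall>B::'a set. finite B \<longrightarrow> span B \<noteq> UNIV" and "finite S"
  obtains v where "norm v = 1" "\<And>s. s \<in> S \<Longrightarrow> inner v s = 0"
proof -
  obtain E where E: "orthonormal_set E" "span E = span S"
    using orthonormal_basis_of_span[OF assms(2)] by blast
  obtain z where z: "z \<notin> span S"
    using assms by blast
  define w where "w = z - orth_proj E z"
  have "w \<noteq> 0"
    using z orth_proj_in_span[of E z] E(2) by (auto simp: w_def)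
  moreover have "inner w s = 0" if "s \<in> S" for s
    using orthogonal_orth_proj_span[OF E(1), of s z] that E(2) span_base[of s S] by (simp add: w_def)
  ultimately show ?thesis
    using that[of "w /\<^sub>R norm w"] by auto
qed

text \<open>With J acting as the imaginary unit, rank_one J a b is the complex rank-one operator
  z \<mapsto> \<langle>z, a\<rangle> b for the complex inner product whose real part is inner.\<close>

definition rank_one :: "('a \<Rightarrow> 'a) \<Rightarrow> 'a \<Rightarrow> 'a \<Rightarrow> 'a \<Rightarrow> 'a::real_inner" where
  "rank_one J a b z = inner z a *\<^sub>R b + inner z (J a) *\<^sub>R J b"

lemma bounded_linear_rank_one: "bounded_linear (rank_one J a b)"
  unfolding rank_one_def
  by (intro bounded_linear_add bounded_linear_compose[OF bounded_linear_scaleR_left bounded_linear_inner_left])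

lemma rank_one_eq_0: "inner z a = 0 \<Longrightarrow> inner z (J a) = 0 \<Longrightarrow> rank_one J a b z = 0"
  by (simp add: rank_one_def)

context complex_space
begin

lemma rank_one_J: "rank_one J a b (J z) = J (rank_one J a b z)"
  by (simp add: rank_one_def J.add J.scaleR inner_J_left)

lemma norm_rank_one_le: "norm (rank_one J a b z) \<le> 2 * norm a * norm b * norm z"
proof -
  have "norm (rank_one J a b z) \<le> \<bar>inner z a\<bar> * norm b + \<bar>inner z (J a)\<bar> * norm b"
    unfolding rank_one_def by (rule order_trans[OF norm_triangle_ineq]) simp
  also have "\<dots> \<le> norm z * norm a * norm b + norm z * norm a * norm b"
    by (intro add_mono mult_right_mono) (auto intro: order_trans[OF Cauchy_Schwarz_ineq2])
  finally show ?thesis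
    by (simp add: algebra_simps)
qed

lemma orth_proj_J:
  assumes "orthonormal_set E" "\<And>g. g \<in> span E \<Longrightarrow> J g \<in> span E"
  shows "orth_proj E (J z) = J (orth_proj E z)"
proof (rule orth_proj_unique[OF assms(1)])
  show "J (orth_proj E z) \<in> span E"
    using assms(2) orth_proj_in_span by blast
  fix g assume g: "g \<in> span E"
  have "inner (J z - J (orth_proj E z)) g = - inner (z - orth_proj E z) (J g)"
    by (simp add: J.diff[symmetric] inner_J_left)
  also have "\<dots> = 0"
    using orthogonal_orth_proj_span[OF assms(1) assms(2)[OF g]] by simp
  finally show "inner (J z - J (orth_proj E z)) g = 0" .
qed

lemma J_invariant_orthonormal_basis:
  assumes "finite S"
  obtains E where "orthonormal_set E" "S \<subseteq> span E" "\<And>g. g \<in> span E \<Longrightarrow> J g \<in> span E"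
proof -
  let ?S = "S \<union> J ` S"
  obtain E where E: "orthonormal_set E" "span E = span ?S"
    using orthonormal_basis_of_span[of ?S] assms by blast
  have "J ` ?S \<subseteq> span ?S"
    by (auto simp: span_neg span_base)
  from span_mono[OF this] have "J ` span ?S \<subseteq> span ?S"
    by (simp add: span_linear_image[OF linear_J] span_span)
  then show ?thesis
    using that[OF E(1)] E(2) span_superset[of ?S] by blast
qed

lemma exists_orthonormal_chain:
  assumes "\<forall>B::'a set. finite B \<longrightarrow> span B \<noteq> UNIV" and "finite S"
  shows "\<exists>ws::nat \<Rightarrow> 'a. \<forall>i\<le>N. \<forall>j\<le>N. inner (ws i) (ws j) = (if i = j then 1 else 0)
            \<and> inner (ws i) (J (ws j)) = 0 \<and> (\<forall>s\<in>S. inner (ws i) s = 0)"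
proof (induction N)
  case 0
  obtain v where "norm v = 1" "\<And>s. s \<in> S \<Longrightarrow> inner v s = 0"
    using exists_unit_orthogonal[OF assms] by blast
  then show ?case
    by (intro exI[of _ "\<lambda>_. v"]) (auto simp: power2_norm_eq_inner[symmetric])
next
  case (Suc N)
  then obtain ws where ws: "\<forall>i\<le>N. \<forall>j\<le>N. inner (ws i) (ws j) = (if i = j then 1 else 0)
            \<and> inner (ws i) (J (ws j)) = 0 \<and> (\<forall>s\<in>S. inner (ws i) s = 0)"
    by blast
  obtain v where v: "norm v = 1" "\<And>s. s \<in> S \<union> ws ` {..N} \<union> J ` ws ` {..N} \<Longrightarrow> inner v s = 0"
    using exists_unit_orthogonal[OF assms(1), of "S \<union> ws ` {..N} \<union> J ` ws ` {..N}"] assms(2)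
    by blast
  have vv: "inner v v = 1"
    using v(1) by (simp add: power2_norm_eq_inner[symmetric])
  have v_ws: "inner v (ws j) = 0" "inner v (J (ws j)) = 0" if "j \<le> N" for j
    using v(2) that by auto
  have v_Jws: "inner (ws j) (J v) = 0" if "j \<le> N" for j
    using v_ws(2)[OF that] inner_J_left[of v "ws j"] by (simp add: inner_commute)
  show ?case
  proof (intro exI[of _ "ws(Suc N := v)"] allI impI conjI ballI)
    fix i j assume i: "i \<le> Suc N" and j: "j \<le> Suc N"
    show "inner ((ws(Suc N := v)) i) ((ws(Suc N := v)) j) = (if i = j then 1 else 0)"
      using ws v_ws vv i j by (cases "i = Suc N"; cases "j = Suc N") (auto simp: inner_commute le_Suc_eq)
    show "inner ((ws(Suc N := v)) i) (J ((ws(Suc N := v)) j)) = 0"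
      using ws v_ws v_Jws i j by (cases "i = Suc N"; cases "j = Suc N") (auto simp: le_Suc_eq)
  next
    fix i s assume "i \<le> Suc N" "s \<in> S"
    then show "inner ((ws(Suc N := v)) i) s = 0"
      using ws v(2) by (cases "i = Suc N") (auto simp: le_Suc_eq)
  qed
qed

end

section \<open>Steering an orbit by a small perturbation\<close>

lemma sum_times_UNIV_bool: "(\<Sum>i\<in>K \<times> (UNIV :: bool set). f i) = (\<Sum>j\<in>K. f (j, False) + f (j, True))"
proof -
  have "(\<Sum>i\<in>K \<times> (UNIV :: bool set). f i) = (\<Sum>j\<in>K. \<Sum>\<beta>\<in>UNIV. f (j, \<beta>))"
    by (simp add: sum.cartesian_product)
  then show ?thesis
    by (simp add: UNIV_bool)
qed

text \<open>Inside an orthonormal J-invariant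
  subspace span E we keep a slightly shrunk compression A of T0; on a J-orthonormal chain
  ws 0, \<dots>, ws N orthogonal to it we put a weighted shift with weight c > 1, and ws N is sent
  to a vector bv chosen so that T' maps x' = x + \<tau> ws 0 to y' after N + 1 steps.
  Conjugating with V = U\<inverse>, a small perturbation of the identity with U x' = x,
  gives T = U T' V with T^(N+1) x = U y' = y. For large N the vector bv is small,
  so T stays in the ball of radius R and close to T0 on span E.\<close>

locale hypercyclic_perturbation = complex_space J
  for J :: "'a::{real_inner,complete_space} \<Rightarrow> 'a" +
  fixes E :: "'a set" and ws :: "nat \<Rightarrow> 'a" and N :: nat and T0 :: "'a \<Rightarrow>\<^sub>L 'a"
    and x y :: 'a and \<eta> \<tau> R :: real
  assumes orthonormal_E: "orthonormal_set E"
    and span_E_J: "\<And>g. g \<in> span E \<Longrightarrow> J g \<in> span E"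
    and ws_orthonormal: "\<And>i j. i \<le> N \<Longrightarrow> j \<le> N \<Longrightarrow> inner (ws i) (ws j) = (if i = j then 1 else 0)"
    and ws_J_orthogonal: "\<And>i j. i \<le> N \<Longrightarrow> j \<le> N \<Longrightarrow> inner (ws i) (J (ws j)) = 0"
    and ws_orthogonal_span: "\<And>i g. i \<le> N \<Longrightarrow> g \<in> span E \<Longrightarrow> inner (ws i) g = 0"
    and x_in_span: "x \<in> span E" and x_nonzero: "x \<noteq> 0"
    and T0_ball: "T0 \<in> op_ball J R"
    and eta: "0 < \<eta>" "\<eta> \<le> 1/4" and R_pos: "0 < R"
    and tau: "0 < \<tau>" "\<tau> \<le> norm x / 4"
begin

definition c :: real where
  "c = (1 - \<eta>) * R"

definition P :: "'a \<Rightarrow> 'a" where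
  "P = orth_proj E"

definition A :: "'a \<Rightarrow> 'a" where
  "A = (\<lambda>z. (1 - 2*\<eta>) *\<^sub>R P (T0 (P z)))"

definition shift :: "'a \<Rightarrow> 'a" where
  "shift = (\<lambda>z. c *\<^sub>R (\<Sum>j<N. rank_one J (ws j) (ws (Suc j)) z))"

definition x' :: 'a where
  "x' = x + \<tau> *\<^sub>R ws 0"

definition Q :: "'a \<Rightarrow> 'a" where
  "Q = rank_one J x' (ws 0)"

definition tU :: real where
  "tU = \<tau> / (norm x')\<^sup>2"

definition sV :: real where
  "sV = tU / (1 - tU * \<tau>)"

definition U :: "'a \<Rightarrow> 'a" where
  "U = (\<lambda>z. z - tU *\<^sub>R Q z)"

definition V :: "'a \<Rightarrow> 'a" where
  "V = (\<lambda>z. z + sV *\<^sub>R Q z)"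

definition y' :: 'a where
  "y' = V y"

definition bv :: 'a where
  "bv = (1 / (\<tau> * c ^ N)) *\<^sub>R (y' - (A ^^ Suc N) x)"

definition T' :: "'a \<Rightarrow> 'a" where
  "T' = (\<lambda>z. A z + shift z + rank_one J (ws N) bv z)"

definition T :: "'a \<Rightarrow> 'a" where
  "T = (\<lambda>z. U (T' (V z)))"

definition \<kappa> :: real where
  "\<kappa> = 4 * \<tau> / norm x"

lemma T0_J: "T0 (J v) = J (T0 v)"
  using T0_ball by (simp add: op_ball_def complex_ops_def)

lemma norm_T0_le: "norm (T0 z) \<le> R * norm z"
proof -
  have "norm T0 \<le> R"
    using T0_ball by (simp add: op_ball_def)
  then show ?thesis
    using norm_blinfun[of T0 z] by (meson mult_right_mono norm_ge_zero order_trans)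
qed

lemma ws_norm: "i \<le> N \<Longrightarrow> norm (ws i) = 1"
  using ws_orthonormal[of i i] by (simp add: norm_eq_sqrt_inner)

lemma span_orthogonal_ws: "i \<le> N \<Longrightarrow> g \<in> span E \<Longrightarrow> inner g (ws i) = 0"
  using ws_orthogonal_span by (simp add: inner_commute)

lemma span_orthogonal_J_ws: "i \<le> N \<Longrightarrow> g \<in> span E \<Longrightarrow> inner g (J (ws i)) = 0"
  using ws_orthogonal_span[of i "J g"] span_E_J inner_J_left[of "ws i" g] by (simp add: inner_commute)

lemma c_pos: "0 < c"
  using eta R_pos by (simp add: c_def)

lemma c_eq: "c = R - \<eta> * R"
  by (simp add: c_def algebra_simps)

lemma P_in_span: "P z \<in> span E"
  by (simp add: P_def orth_proj_in_span)

lemma P_ws: "i \<le> N \<Longrightarrow> P (ws i) = 0"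
  unfolding P_def orth_proj_def by (rule sum.neutral) (simp add: ws_orthogonal_span span_base)

lemma norm_P_le: "norm (P z) \<le> norm z"
  using norm_orth_proj_le[OF orthonormal_E] by (simp add: P_def)

lemma P_id: "g \<in> span E \<Longrightarrow> P g = g"
  using orth_proj_id[OF orthonormal_E] by (simp add: P_def)

lemma P_J: "P (J z) = J (P z)"
  using orth_proj_J[OF orthonormal_E span_E_J] by (simp add: P_def)

lemma A_in_span: "A z \<in> span E"
  by (simp add: A_def span_mul P_in_span)

lemma bounded_linear_A: "bounded_linear A"
  unfolding A_def P_def
  by (intro bounded_linear_compose[OF bounded_linear_scaleR_right] bounded_linear_compose[OF bounded_linear_orth_proj]
      bounded_linear_compose[OF blinfun.bounded_linear_right bounded_linear_orth_proj])

lemma A_J: "A (J z) = J (A z)"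
  by (simp add: A_def P_J T0_J J.scaleR)

lemma A_ws: "i \<le> N \<Longrightarrow> A (ws i) = 0"
  by (simp add: A_def P_ws) (simp add: P_def orth_proj_def)

lemma norm_A_le: "norm (A z) \<le> (1 - 2*\<eta>) * R * norm (P z)"
proof -
  have "norm (A z) = (1 - 2*\<eta>) * norm (P (T0 (P z)))"
    using eta by (simp add: A_def)
  also have "\<dots> \<le> (1 - 2*\<eta>) * (R * norm (P z))"
    using eta norm_P_le norm_T0_le by (intro mult_left_mono) (auto intro: order_trans)
  finally show ?thesis
    by simp
qed

lemma norm_A_iterate_le: "norm ((A ^^ k) x) \<le> ((1 - 2*\<eta>) * R) ^ k * norm x"
proof (induction k)
  case (Suc k)
  have "norm ((A ^^ Suc k) x) \<le> (1 - 2*\<eta>) * R * norm (P ((A ^^ k) x))"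
    using norm_A_le by simp
  also have "\<dots> \<le> (1 - 2*\<eta>) * R * norm ((A ^^ k) x)"
    using norm_P_le eta R_pos by (intro mult_left_mono) auto
  also have "\<dots> \<le> (1 - 2*\<eta>) * R * (((1 - 2*\<eta>) * R) ^ k * norm x)"
    using Suc eta R_pos by (intro mult_left_mono) auto
  finally show ?case
    by (simp add: algebra_simps)
qed simp

lemma A_iterate_in_span: "(A ^^ k) x \<in> span E"
  by (cases k) (auto simp: x_in_span A_in_span)

lemma bounded_linear_shift: "bounded_linear shift"
  unfolding shift_def
  by (intro bounded_linear_compose[OF bounded_linear_scaleR_right] bounded_linear_sum bounded_linear_rank_one)

lemma shift_J: "shift (J z) = J (shift z)"
  by (simp add: shift_def rank_one_J J.sum J.scaleR)

lemma shift_span: "g \<in> span E \<Longrightarrow> shift g = 0"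
  by (simp add: shift_def rank_one_eq_0 span_orthogonal_ws span_orthogonal_J_ws)

lemma shift_ws: assumes "k < N" shows "shift (ws k) = c *\<^sub>R ws (Suc k)"
proof -
  have "rank_one J (ws j) (ws (Suc j)) (ws k) = (if j = k then ws (Suc k) else 0)" if "j < N" for j
    using that assms ws_orthonormal[of k j] ws_J_orthogonal[of k j] by (auto simp: rank_one_def)
  then have "(\<Sum>j<N. rank_one J (ws j) (ws (Suc j)) (ws k)) = (\<Sum>j<N. if j = k then ws (Suc k) else 0)"
    by (intro sum.cong) auto
  also have "\<dots> = ws (Suc k)"
    using assms by simp
  finally show ?thesis
    by (simp add: shift_def)
qed

lemma shift_ws_N: "shift (ws N) = 0"
  using ws_orthonormal[of N] ws_J_orthogonal[of N]
  by (simp add: shift_def rank_one_eq_0)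

text \<open>Together with their images under J the chain vectors form a real orthonormal family,
  so Bessel's inequality bounds the shift.\<close>

definition ws_real :: "nat \<times> bool \<Rightarrow> 'a" where
  "ws_real = (\<lambda>(j, \<beta>). if \<beta> then J (ws j) else ws j)"

lemma orthonormal_on_ws_real: "orthonormal_on ({..N} \<times> UNIV) ws_real"
  unfolding orthonormal_on_def
proof (intro ballI)
  fix i i' assume "i \<in> {..N} \<times> (UNIV :: bool set)" "i' \<in> {..N} \<times> (UNIV :: bool set)"
  then obtain j \<beta> j' \<beta>' where "i = (j, \<beta>)" "i' = (j', \<beta>')" "j \<le> N" "j' \<le> N"
    by auto
  then show "inner (ws_real i) (ws_real i') = (if i = i' then 1 else 0)"
    using ws_orthonormal[of j j'] ws_J_orthogonal[of j j'] ws_J_orthogonal[of j' j]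
      inner_J_left[of "ws j" "ws j'"]
    by (cases \<beta>; cases \<beta>') (auto simp: ws_real_def inner_commute)
qed

lemma orthonormal_on_ws_real_Suc: "orthonormal_on ({..<N} \<times> UNIV) (\<lambda>i. ws_real (Suc (fst i), snd i))"
  using orthonormal_on_ws_real unfolding orthonormal_on_def by fastforce

lemma shift_eq_sum_ws_real:
  "shift z = c *\<^sub>R (\<Sum>i\<in>{..<N} \<times> UNIV. inner z (ws_real i) *\<^sub>R ws_real (Suc (fst i), snd i))"
  by (simp add: shift_def sum_times_UNIV_bool rank_one_def ws_real_def)

lemma norm_shift_squared: "(norm (shift z))\<^sup>2 = c\<^sup>2 * (\<Sum>i\<in>{..<N} \<times> UNIV. (inner z (ws_real i))\<^sup>2)"
  unfolding shift_eq_sum_ws_real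
  using norm_sum_orthonormal_on[OF orthonormal_on_ws_real_Suc, of "\<lambda>i. inner z (ws_real i)"] c_pos
  by (simp add: power_mult_distrib)

lemma norm_A_plus_shift_le: "norm (A z + shift z) \<le> c * norm z"
proof -
  let ?I = "{..<N} \<times> (UNIV :: bool set)"
  have "orthogonal (A z) (shift z)"
    using A_in_span by (simp add: orthogonal_def shift_def inner_sum_right rank_one_def inner_add_right
        span_orthogonal_ws span_orthogonal_J_ws)
  then have pyth: "(norm (A z + shift z))\<^sup>2 = (norm (A z))\<^sup>2 + (norm (shift z))\<^sup>2"
    by (rule norm_add_Pythagorean)
  have "(1 - 2*\<eta>) * R * norm (P z) \<le> c * norm (P z)"
    using eta R_pos by (intro mult_right_mono) (auto simp: c_def)
  then have "norm (A z) \<le> c * norm (P z)"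
    using norm_A_le[of z] by linarith
  then have A_part: "(norm (A z))\<^sup>2 \<le> c\<^sup>2 * (norm (P z))\<^sup>2"
    by (metis norm_ge_zero power2_le_imp_le power_mono power_mult_distrib)
  have "inner (P z) (ws_real i) = 0" if "i \<in> ?I" for i
    using that P_in_span by (auto simp: ws_real_def span_orthogonal_ws span_orthogonal_J_ws)
  then have "(\<Sum>i\<in>?I. (inner z (ws_real i))\<^sup>2) = (\<Sum>i\<in>?I. (inner (z - P z) (ws_real i))\<^sup>2)"
    by (simp add: inner_diff_left)
  also have "\<dots> \<le> (norm (z - P z))\<^sup>2"
    by (rule bessel_inequality[OF orthonormal_on_subset[OF orthonormal_on_ws_real]]) auto
  finally have shift_part: "(norm (shift z))\<^sup>2 \<le> c\<^sup>2 * (norm (z - P z))\<^sup>2"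
    unfolding norm_shift_squared by (simp add: mult_left_mono)
  have "(norm (A z + shift z))\<^sup>2 \<le> c\<^sup>2 * ((norm (P z))\<^sup>2 + (norm (z - P z))\<^sup>2)"
    unfolding pyth distrib_left using A_part shift_part by (rule add_mono)
  also have "\<dots> = (c * norm z)\<^sup>2"
    using orth_proj_pythagoras[OF orthonormal_E, of z] by (simp add: P_def power_mult_distrib)
  finally show ?thesis
    by (rule power2_le_imp_le) (use c_pos in simp)
qed


lemma bounded_linear_T': "bounded_linear T'"
  unfolding T'_def by (intro bounded_linear_add bounded_linear_A bounded_linear_shift bounded_linear_rank_one)

lemma T'_J: "T' (J z) = J (T' z)"
  by (simp add: T'_def A_J shift_J rank_one_J J.add)

lemma norm_T'_le: "norm (T' z) \<le> (c + 2 * norm bv) * norm z"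
proof -
  have "norm (T' z) \<le> norm (A z + shift z) + norm (rank_one J (ws N) bv z)"
    unfolding T'_def by (rule norm_triangle_ineq)
  also have "\<dots> \<le> c * norm z + 2 * norm bv * norm z"
    using norm_A_plus_shift_le norm_rank_one_le[of "ws N" bv z] ws_norm[of N] by (intro add_mono) auto
  finally show ?thesis
    by (simp add: algebra_simps)
qed

lemma T'_span: "g \<in> span E \<Longrightarrow> T' g = A g"
  by (simp add: T'_def shift_span rank_one_eq_0 span_orthogonal_ws span_orthogonal_J_ws)

lemma T'_ws: "k < N \<Longrightarrow> T' (ws k) = c *\<^sub>R ws (Suc k)"
  using ws_orthonormal[of k N] ws_J_orthogonal[of k N]
  by (simp add: T'_def A_ws shift_ws rank_one_eq_0)

lemma T'_ws_N: "T' (ws N) = bv"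
  using ws_orthonormal[of N N] ws_J_orthogonal[of N N]
  by (simp add: T'_def A_ws shift_ws_N rank_one_def)

lemma T'_iterate_x': "k \<le> N \<Longrightarrow> (T' ^^ k) x' = (A ^^ k) x + (\<tau> * c ^ k) *\<^sub>R ws k"
proof (induction k)
  case (Suc k)
  then have "(T' ^^ Suc k) x' = T' ((A ^^ k) x) + (\<tau> * c ^ k) *\<^sub>R T' (ws k)"
    using bounded_linear_T' by (simp add: bounded_linear.linear linear_add linear_scale)
  also have "\<dots> = (A ^^ Suc k) x + (\<tau> * c ^ Suc k) *\<^sub>R ws (Suc k)"
    using Suc.prems by (simp add: T'_span[OF A_iterate_in_span] T'_ws)
  finally show ?case .
qed (simp add: x'_def)

lemma T'_iterate_hits_y': "(T' ^^ Suc N) x' = y'"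
proof -
  have "(T' ^^ Suc N) x' = T' ((A ^^ N) x) + (\<tau> * c ^ N) *\<^sub>R T' (ws N)"
    using bounded_linear_T' by (simp add: T'_iterate_x' bounded_linear.linear linear_add linear_scale)
  also have "\<dots> = y'"
    using tau c_pos by (simp add: T'_span[OF A_iterate_in_span] T'_ws_N bv_def)
  finally show ?thesis .
qed

lemma norm_bv_le: "norm bv \<le> (norm y' + ((1 - 2*\<eta>) * R) ^ Suc N * norm x) / (\<tau> * c ^ N)"
proof -
  have "norm bv = norm (y' - (A ^^ Suc N) x) / (\<tau> * c ^ N)"
    using tau c_pos by (simp add: bv_def)
  also have "\<dots> \<le> (norm y' + ((1 - 2*\<eta>) * R) ^ Suc N * norm x) / (\<tau> * c ^ N)"
    using tau c_pos norm_A_iterate_le[of "Suc N"] norm_triangle_ineq4[of y' "(A ^^ Suc N) x"]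
    by (intro divide_right_mono) auto
  finally show ?thesis .
qed


lemma x_pos: "0 < norm x"
  using x_nonzero by simp

lemma kappa_nonneg: "0 \<le> \<kappa>"
  using tau x_pos by (simp add: \<kappa>_def)

lemma norm_x'_squared: "(norm x')\<^sup>2 = (norm x)\<^sup>2 + \<tau>\<^sup>2"
proof -
  have "orthogonal x (\<tau> *\<^sub>R ws 0)"
    using span_orthogonal_ws[OF _ x_in_span] by (simp add: orthogonal_def)
  then show ?thesis
    unfolding x'_def using ws_norm[of 0] by (simp add: norm_add_Pythagorean power_mult_distrib)
qed

lemma norm_x_le_x': "norm x \<le> norm x'"
  using norm_x'_squared by (metis le_add_same_cancel1 norm_ge_zero power2_le_imp_le zero_le_power2)

lemma x'_pos: "0 < norm x'"
  using norm_x_le_x' x_pos by linarith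

lemma Q_Q: "Q (Q z) = \<tau> *\<^sub>R Q z"
proof -
  have "inner (ws 0) x' = \<tau>" "inner (J (ws 0)) x' = 0"
    using span_orthogonal_ws[OF _ x_in_span] ws_orthonormal[of 0 0] ws_orthogonal_span[of 0 "J x"]
      span_E_J[OF x_in_span] inner_J_left[of "ws 0" x]
    by (simp_all add: x'_def inner_add_right inner_commute)
  moreover have "inner (ws 0) (J x') = 0"
    using calculation(2) inner_J_left[of "ws 0" x'] by simp
  ultimately show ?thesis
    by (simp add: Q_def rank_one_def algebra_simps)
qed

lemma bounded_linear_Q: "bounded_linear Q"
  by (simp add: Q_def bounded_linear_rank_one)

lemma tU_pos: "0 < tU"
  using tau x'_pos by (simp add: tU_def)

lemma tU_tau_le: "tU * \<tau> \<le> 1/2"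
proof -
  have "\<tau>\<^sup>2 \<le> (norm x / 4)\<^sup>2"
    using tau by (intro power_mono) auto
  then have "16 * \<tau>\<^sup>2 \<le> (norm x)\<^sup>2"
    by (simp add: power_divide)
  then have "2 * \<tau>\<^sup>2 \<le> (norm x')\<^sup>2"
    using norm_x'_squared zero_le_power2[of \<tau>] by linarith
  moreover have "tU * \<tau> = \<tau>\<^sup>2 / (norm x')\<^sup>2"
    by (simp add: tU_def power2_eq_square)
  ultimately show ?thesis
    using x'_pos by (simp add: pos_divide_le_eq)
qed

lemma sV_bounds: "0 \<le> sV" "sV \<le> 2 * tU"
proof -
  have "1/2 \<le> 1 - tU * \<tau>"
    using tU_tau_le by simp
  then show "0 \<le> sV" "sV \<le> 2 * tU"
    using tU_pos tU_tau_le by (simp_all add: sV_def divide_simps)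
qed

text \<open>Since Q is \<tau> times an idempotent, I - tU Q and I + sV Q are mutually inverse
  exactly when sV (1 - tU \<tau>) = tU, which is the definition of sV.\<close>

lemma U_V: "U (V z) = z"
proof -
  have "U (V z) = z + (sV - tU - tU * (sV * \<tau>)) *\<^sub>R Q z"
    using bounded_linear_Q
    by (simp add: U_def V_def Q_Q bounded_linear.linear linear_add linear_scale algebra_simps)
  also have "sV - tU - tU * (sV * \<tau>) = 0"
    using tU_tau_le by (simp add: sV_def field_simps)
  finally show ?thesis
    by simp
qed

lemma V_U: "V (U z) = z"
proof -
  have "V (U z) = z + (sV - tU - sV * (tU * \<tau>)) *\<^sub>R Q z"
    using bounded_linear_Q
    by (simp add: U_def V_def Q_Q bounded_linear.linear linear_diff linear_scale algebra_simps)
  also have "sV - tU - sV * (tU * \<tau>) = 0"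
    using tU_tau_le by (simp add: sV_def field_simps)
  finally show ?thesis
    by simp
qed

lemma U_x': "U x' = x"
proof -
  have "Q x' = (norm x')\<^sup>2 *\<^sub>R ws 0"
    by (simp add: Q_def rank_one_def power2_norm_eq_inner)
  moreover have "tU * (norm x')\<^sup>2 = \<tau>"
    using x'_pos by (simp add: tU_def)
  ultimately show ?thesis
    by (simp add: U_def x'_def)
qed

lemma V_x: "V x = x'"
  using V_U[of x'] U_x' by simp

lemma norm_Q_le: "norm (Q z) \<le> 2 * norm x' * norm z"
  using norm_rank_one_le[of x' "ws 0" z] ws_norm[of 0] by (simp add: Q_def)

lemma norm_U_minus_id_le: "norm (U z - z) \<le> \<kappa> * norm z"
proof -
  have "norm (U z - z) = tU * norm (Q z)"
    using tU_pos by (simp add: U_def)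
  also have "\<dots> \<le> tU * (2 * norm x' * norm z)"
    using tU_pos norm_Q_le by (simp add: mult_left_mono)
  also have "\<dots> = (2 * \<tau> / norm x') * norm z"
    using x'_pos by (simp add: tU_def power2_eq_square)
  also have "\<dots> \<le> \<kappa> * norm z"
    using norm_x_le_x' x_pos tau by (intro mult_right_mono) (auto simp: \<kappa>_def divide_simps)
  finally show ?thesis .
qed

lemma norm_V_minus_id_le: "norm (V z - z) \<le> \<kappa> * norm z"
proof -
  have "norm (V z - z) = sV * norm (Q z)"
    using sV_bounds by (simp add: V_def)
  also have "\<dots> \<le> (2 * tU) * (2 * norm x' * norm z)"
    using sV_bounds tU_pos norm_Q_le by (intro mult_mono) auto
  also have "\<dots> = (4 * \<tau> / norm x') * norm z"
    using x'_pos by (simp add: tU_def power2_eq_square)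
  also have "\<dots> \<le> \<kappa> * norm z"
    using norm_x_le_x' x_pos tau by (intro mult_right_mono) (auto simp: \<kappa>_def divide_simps)
  finally show ?thesis .
qed

lemma norm_U_le: "norm (U z) \<le> (1 + \<kappa>) * norm z"
  using norm_U_minus_id_le[of z] norm_triangle_ineq2[of "U z" z] by (simp add: algebra_simps)

lemma norm_V_le: "norm (V z) \<le> (1 + \<kappa>) * norm z"
  using norm_V_minus_id_le[of z] norm_triangle_ineq2[of "V z" z] by (simp add: algebra_simps)


lemma U_J: "U (J z) = J (U z)"
  by (simp add: U_def Q_def rank_one_J J.diff J.scaleR)

lemma V_J: "V (J z) = J (V z)"
  by (simp add: V_def Q_def rank_one_J J.add J.scaleR)

lemma bounded_linear_T: "bounded_linear T"
  unfolding T_def U_def V_def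
  by (intro bounded_linear_compose[OF bounded_linear_sub[OF bounded_linear_ident]]
      bounded_linear_compose[OF bounded_linear_T'] bounded_linear_add bounded_linear_ident
      bounded_linear_compose[OF bounded_linear_scaleR_right bounded_linear_Q])

lemma T_J: "T (J z) = J (T z)"
  by (simp add: T_def U_J V_J T'_J)

lemma T_iterate: "(T ^^ n) z = U ((T' ^^ n) (V z))"
  by (induction n arbitrary: z) (simp_all add: U_V T_def V_U)

lemma T_iterate_hits_y: "(T ^^ Suc N) x = y"
  by (simp only: T_iterate V_x T'_iterate_hits_y' y'_def U_V)

lemma norm_T_le:
  assumes "norm bv \<le> \<eta> * R / 4" "\<kappa> \<le> \<eta> / 8"
  shows "norm (T z) \<le> R * norm z"
proof -
  let ?L = "c + 2 * norm bv"
  have L: "0 \<le> ?L" "?L \<le> (1 - \<eta>/2) * R"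
    using c_pos c_eq assms(1) norm_ge_zero[of bv] by (auto simp: algebra_simps)
  have "norm (T z) \<le> (1 + \<kappa>) * norm (T' (V z))"
    by (simp add: T_def norm_U_le)
  also have "\<dots> \<le> (1 + \<kappa>) * (?L * norm (V z))"
    using kappa_nonneg norm_T'_le by (intro mult_left_mono) auto
  also have "\<dots> \<le> (1 + \<kappa>) * (?L * ((1 + \<kappa>) * norm z))"
    using kappa_nonneg L(1) norm_V_le by (intro mult_left_mono) auto
  also have "\<dots> = ((1 + \<kappa>) * (1 + \<kappa>)) * ?L * norm z"
    by (simp add: algebra_simps)
  also have "\<dots> \<le> (1 + 3 * \<eta> / 8) * ((1 - \<eta>/2) * R) * norm z"
  proof (intro mult_right_mono mult_mono)
    have "\<kappa> * \<kappa> \<le> \<kappa>"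
      using assms(2) eta kappa_nonneg by (intro mult_left_le_one_le) auto
    then show "(1 + \<kappa>) * (1 + \<kappa>) \<le> 1 + 3 * \<eta> / 8"
      using assms(2) by (simp add: algebra_simps)
  qed (use L eta in auto)
  also have "\<dots> \<le> R * norm z"
    using eta R_pos by (intro mult_right_mono) (auto simp: algebra_simps)
  finally show ?thesis .
qed

lemma norm_T_minus_T0_le:
  assumes "norm bv \<le> \<eta> * R / 4" "\<kappa> \<le> \<eta> / 8" "u \<in> span E" "T0 u \<in> span E"
  shows "norm (T u - T0 u) \<le> (3 * \<kappa> + 2 * \<eta>) * R * norm u"
proof -
  let ?L = "c + 2 * norm bv"
  have L: "0 \<le> ?L" "?L \<le> R"
    using c_pos c_eq assms(1) norm_ge_zero[of bv] mult_pos_pos[OF eta(1) R_pos] by linarith+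
  have \<kappa>: "0 \<le> \<kappa>" "\<kappa> \<le> 1"
    using kappa_nonneg assms(2) eta by auto
  have T'_u: "T' u = (1 - 2*\<eta>) *\<^sub>R T0 u"
    using assms(3,4) by (simp add: T'_span A_def P_id)
  have decomp: "T u - T0 u = (U (T' (V u)) - T' (V u)) + T' (V u - u) + (- 2 * \<eta>) *\<^sub>R T0 u"
    (is "_ = ?a + ?b + ?c")
    using bounded_linear_T' T'_u by (simp add: T_def bounded_linear.linear linear_diff algebra_simps)
  have "norm (T u - T0 u) \<le> norm ?a + norm ?b + norm ?c"
    unfolding decomp using norm_triangle_ineq[of "?a + ?b" ?c] norm_triangle_ineq[of ?a ?b] by linarith
  also have "\<dots> \<le> \<kappa> * (R * (2 * norm u)) + R * (\<kappa> * norm u) + 2 * \<eta> * (R * norm u)"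
  proof (intro add_mono)
    have "norm (U (T' (V u)) - T' (V u)) \<le> \<kappa> * norm (T' (V u))"
      by (rule norm_U_minus_id_le)
    also have "\<dots> \<le> \<kappa> * (?L * norm (V u))"
      using \<kappa> norm_T'_le by (intro mult_left_mono) auto
    also have "\<dots> \<le> \<kappa> * (R * (2 * norm u))"
    proof -
      have "(1 + \<kappa>) * norm u \<le> 2 * norm u"
        using \<kappa> by (intro mult_right_mono) auto
      then show ?thesis
        using \<kappa> L norm_V_le[of u] by (intro mult_left_mono mult_mono) auto
    qed
    finally show "norm (U (T' (V u)) - T' (V u)) \<le> \<kappa> * (R * (2 * norm u))" .
    have "norm (T' (V u - u)) \<le> ?L * norm (V u - u)"
      by (rule norm_T'_le)
    also have "\<dots> \<le> R * (\<kappa> * norm u)"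
      using L norm_V_minus_id_le by (intro mult_mono) auto
    finally show "norm (T' (V u - u)) \<le> R * (\<kappa> * norm u)" .
    show "norm ((- 2 * \<eta>) *\<^sub>R T0 u) \<le> 2 * \<eta> * (R * norm u)"
      using eta norm_T0_le[of u] by (simp add: mult_left_mono)
  qed
  finally show ?thesis
    by (simp add: algebra_simps)
qed

lemma norm_bv_le_if_N_large:
  assumes "\<kappa> \<le> 1"
    and "2 * norm y \<le> (\<eta> * R * \<tau> / 8) * c ^ N"
    and "((1 - 2*\<eta>) * R) ^ Suc N * norm x \<le> (\<eta> * R * \<tau> / 8) * c ^ N"
  shows "norm bv \<le> \<eta> * R / 4"
proof -
  have "norm y' \<le> (1 + \<kappa>) * norm y"
    by (simp add: y'_def norm_V_le)
  also have "\<dots> \<le> 2 * norm y"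
    using assms(1) by (intro mult_right_mono) auto
  finally have "norm y' + ((1 - 2*\<eta>) * R) ^ Suc N * norm x \<le> 2 * ((\<eta> * R * \<tau> / 8) * c ^ N)"
    using assms(2,3) by linarith
  then have "norm bv \<le> (2 * ((\<eta> * R * \<tau> / 8) * c ^ N)) / (\<tau> * c ^ N)"
    using tau c_pos by (intro order_trans[OF norm_bv_le] divide_right_mono) auto
  also have "\<dots> = \<eta> * R / 4"
    using tau c_pos by (simp add: field_simps)
  finally show ?thesis .
qed


lemma perturbation_in_op_ball:
  assumes "norm bv \<le> \<eta> * R / 4" "\<kappa> \<le> \<eta> / 8"
  obtains T1 where "T1 \<in> op_ball J R" "(blinfun_apply T1 ^^ Suc N) x = y"
    "\<And>u. u \<in> span E \<Longrightarrow> T0 u \<in> span E \<Longrightarrow> norm (T1 u - T0 u) \<le> (3 * \<kappa> + 2 * \<eta>) * R * norm u"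
proof
  have T: "blinfun_apply (Blinfun T) = T"
    using bounded_linear_T by (simp add: bounded_linear_Blinfun_apply)
  have "norm (Blinfun T) \<le> R"
    using norm_T_le[OF assms] R_pos by (intro norm_blinfun_bound) (auto simp: T)
  then show "Blinfun T \<in> op_ball J R"
    using T_J by (simp add: op_ball_def complex_ops_def T)
  show "(blinfun_apply (Blinfun T) ^^ Suc N) x = y"
    using T_iterate_hits_y by (simp add: T)
  show "norm (Blinfun T u - T0 u) \<le> (3 * \<kappa> + 2 * \<eta>) * R * norm u"
    if "u \<in> span E" "T0 u \<in> span E" for u
    using norm_T_minus_T0_le[OF assms that] by (simp add: T)
qed

end

lemma eventually_power_le_power:
  fixes a c K C :: real
  assumes "0 \<le> a" "a < c" "0 < K"
  shows "\<forall>\<^sub>F N in sequentially. C * a ^ N \<le> K * c ^ N"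
proof -
  have c: "0 < c"
    using assms by linarith
  have "(\<lambda>N. C * (a / c) ^ N) \<longlonglongrightarrow> 0"
    using assms c by (intro tendsto_mult_right_zero LIMSEQ_realpow_zero) auto
  then have "\<forall>\<^sub>F N in sequentially. C * (a / c) ^ N < K"
    using assms(3) by (rule order_tendstoD)
  then show ?thesis
  proof (rule eventually_mono)
    fix N assume "C * (a / c) ^ N < K"
    then have "C * (a / c) ^ N * c ^ N \<le> K * c ^ N"
      using c by (intro mult_right_mono) auto
    then show "C * a ^ N \<le> K * c ^ N"
      using c by (simp add: power_divide)
  qed
qed

context complex_space
begin

lemma exists_perturbation_steering_orbit:
  assumes inf_dim: "\<forall>B::'a set. finite B \<longrightarrow> span B \<noteq> UNIV" and R: "R > 1"
    and E: "orthonormal_set E" "\<And>g. g \<in> span E \<Longrightarrow> J g \<in> span E"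
    and x: "x \<in> span E" "x \<noteq> 0" and T0: "T0 \<in> op_ball J R"
    and \<eta>: "0 < \<eta>" "\<eta> \<le> 1/4" "\<eta> \<le> (R-1)/(2*R)" and \<kappa>: "0 < \<kappa>" "\<kappa> \<le> \<eta>/8"
  obtains T where "T \<in> op_ball J R" "\<exists>n. (blinfun_apply T ^^ n) x = y"
    "\<And>u. u \<in> span E \<Longrightarrow> T0 u \<in> span E \<Longrightarrow> norm (T u - T0 u) \<le> (3 * \<kappa> + 2 * \<eta>) * R * norm u"
proof -
  define \<tau> where "\<tau> = \<kappa> * norm x / 4"
  have \<tau>: "0 < \<tau>" "\<tau> \<le> norm x / 4"
    using \<kappa> \<eta> x by (auto simp: \<tau>_def)
  define c where "c = (1 - \<eta>) * R"
  define a where "a = (1 - 2*\<eta>) * R"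
  have c: "1 < c"
    using \<eta>(3) R by (simp add: c_def field_simps)
  have a: "0 \<le> a" "a < c"
    using \<eta> R by (auto simp: a_def c_def)
  define K where "K = \<eta> * R * \<tau> / 8"
  have K: "0 < K"
    using \<eta> R \<tau> by (simp add: K_def)
  obtain N where N: "2 * norm y \<le> K * c ^ N" "a ^ Suc N * norm x \<le> K * c ^ N"
  proof -
    have "\<forall>\<^sub>F N in sequentially. (2 * norm y) * 1 ^ N \<le> K * c ^ N \<and> (a * norm x) * a ^ N \<le> K * c ^ N"
      using a c K by (intro eventually_conj eventually_power_le_power) auto
    then show ?thesis
      using that by (auto simp: eventually_sequentially mult_ac)
  qed
  obtain ws where ws: "\<forall>i\<le>N. \<forall>j\<le>N. inner (ws i) (ws j) = (if i = j then 1 else 0)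
            \<and> inner (ws i) (J (ws j)) = 0 \<and> (\<forall>e\<in>E. inner (ws i) e = 0)"
    using exists_orthonormal_chain[OF inf_dim, of E N] E(1) by (auto simp: orthonormal_set_def)
  have ws_perp: "inner (ws i) g = 0" if "i \<le> N" "g \<in> span E" for i g
    using orthogonal_to_span[OF that(2), of "ws i"] ws that(1) by (simp add: orthogonal_def)
  interpret P: hypercyclic_perturbation J E ws N T0 x y \<eta> \<tau> R
    using E ws ws_perp T0 \<eta> R \<tau> x by unfold_locales auto
  have P\<kappa>: "P.\<kappa> = \<kappa>"
    unfolding P.\<kappa>_def using x by (simp add: \<tau>_def)
  have "norm P.bv \<le> \<eta> * R / 4"
    using P.norm_bv_le_if_N_large N \<kappa> \<eta> by (simp add: P\<kappa> P.c_def K_def a_def c_def)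
  then obtain T where "T \<in> op_ball J R" "(blinfun_apply T ^^ Suc N) x = y"
    "\<And>u. u \<in> span E \<Longrightarrow> T0 u \<in> span E \<Longrightarrow> norm (T u - T0 u) \<le> (3 * \<kappa> + 2 * \<eta>) * R * norm u"
    using P.perturbation_in_op_ball \<kappa> by (auto simp: P\<kappa>)
  then show ?thesis
    using that by blast
qed

lemma exists_near_operator_with_orbit_through:
  assumes inf_dim: "\<forall>B::'a set. finite B \<longrightarrow> span B \<noteq> UNIV"
    and R: "R > 1" and x: "x \<noteq> 0" and T0: "T0 \<in> op_ball J R" and F: "finite F" and \<delta>: "\<delta> > 0"
  shows "\<exists>T\<in>op_ball J R. (\<exists>n. (blinfun_apply T ^^ n) x = y)
            \<and> (\<forall>u\<in>F. norm (blinfun_apply T u - blinfun_apply T0 u) < \<delta>)"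
proof -
  obtain E where E: "orthonormal_set E" "F \<union> T0 ` F \<union> {x} \<subseteq> span E"
      "\<And>g. g \<in> span E \<Longrightarrow> J g \<in> span E"
    using J_invariant_orthonormal_basis[of "F \<union> T0 ` F \<union> {x}"] F by auto
  define M where "M = 1 + (\<Sum>u\<in>F. norm u)"
  have M: "1 \<le> M" "\<And>u. u \<in> F \<Longrightarrow> norm u \<le> M"
    using member_le_sum[of _ F norm] F by (force simp: M_def sum_nonneg)+
  have scale: "t * (R * M) \<le> \<delta> / 8" if "t \<le> \<delta> / (8 * R * M)" for t
    using that R M by (simp add: pos_le_divide_eq mult_ac)
  have \<delta>RM: "0 < \<delta> / (8 * R * M)"
    using \<delta> R M by simp
  define \<eta> where "\<eta> = min (1/4) (min ((R-1)/(2*R)) (\<delta>/(8*R*M)))"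
  have \<eta>: "0 < \<eta>" "\<eta> \<le> 1/4" "\<eta> \<le> (R-1)/(2*R)" "\<eta> * (R * M) \<le> \<delta>/8"
    using R \<delta>RM scale by (auto simp: \<eta>_def)
  define \<kappa> where "\<kappa> = min (\<eta>/8) (\<delta>/(8*R*M))"
  have \<kappa>: "0 < \<kappa>" "\<kappa> \<le> \<eta>/8" "\<kappa> * (R * M) \<le> \<delta>/8"
    using \<eta> \<delta>RM scale by (auto simp: \<kappa>_def)
  obtain T where T: "T \<in> op_ball J R" "\<exists>n. (blinfun_apply T ^^ n) x = y"
    "\<And>u. u \<in> span E \<Longrightarrow> T0 u \<in> span E \<Longrightarrow> norm (T u - T0 u) \<le> (3 * \<kappa> + 2 * \<eta>) * R * norm u"
    using exists_perturbation_steering_orbit[OF inf_dim R E(1,3) _ x T0 \<eta>(1-3) \<kappa>(1,2)] E(2) by blast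
  have "norm (T u - T0 u) < \<delta>" if u: "u \<in> F" for u
  proof -
    have "norm (T u - T0 u) \<le> (3 * \<kappa> + 2 * \<eta>) * R * norm u"
      using T(3) u E(2) by auto
    also have "\<dots> \<le> (3 * \<kappa> + 2 * \<eta>) * (R * M)"
      using \<kappa> \<eta> R M(2)[OF u] by (simp add: mult.assoc mult_left_mono)
    also have "\<dots> \<le> 5 * (\<delta> / 8)"
      using \<kappa>(3) \<eta>(4) by (simp add: algebra_simps)
    finally show ?thesis
      using \<delta> by simp
  qed
  then show ?thesis
    using T(1,2) by blast
qed

end

section \<open>The strong operator topology on the ball\<close>

definition sot_nbhd :: "('a::real_normed_vector \<Rightarrow>\<^sub>L 'a) set \<Rightarrow> ('a \<Rightarrow>\<^sub>L 'a) \<Rightarrow> 'a set \<Rightarrow> real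
    \<Rightarrow> ('a \<Rightarrow>\<^sub>L 'a) set" where
  "sot_nbhd B T0 F \<delta> = {T \<in> B. \<forall>u\<in>F. norm (T u - T0 u) < \<delta>}"

lemma openin_sot_nbhd:
  assumes "finite F"
  shows "openin (sot_on B) (sot_nbhd B T0 F \<delta>)"
proof -
  have "open {f. \<forall>u\<in>F. f u \<in> ball (T0 u) \<delta>}"
    using product_topology_basis'[of F "\<lambda>u. ball (T0 u) \<delta>" "\<lambda>u. u"] assms by simp
  moreover have "sot_nbhd B T0 F \<delta> = blinfun_apply -` {f. \<forall>u\<in>F. f u \<in> ball (T0 u) \<delta>} \<inter> B"
    by (auto simp: sot_nbhd_def dist_norm norm_minus_commute)
  ultimately show ?thesis
    by (auto simp: sot_on_def openin_pullback_topology)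
qed

lemma sot_open_contains_nbhd:
  assumes "openin (sot_on B) W" "T0 \<in> W"
  obtains F \<delta> where "finite F" "\<delta> > 0" "sot_nbhd B T0 F \<delta> \<subseteq> W"
proof -
  obtain U where U: "open U" "W = blinfun_apply -` U \<inter> B"
    using assms(1) by (auto simp: sot_on_def openin_pullback_topology)
  have "openin (product_topology (\<lambda>i. euclidean) UNIV) U" "blinfun_apply T0 \<in> U"
    using U assms(2) by (auto simp: open_fun_def)
  then obtain X where X: "blinfun_apply T0 \<in> (\<Pi>\<^sub>E i\<in>UNIV. X i)" "\<And>i. open (X i)"
      "finite {i. X i \<noteq> UNIV}" "(\<Pi>\<^sub>E i\<in>UNIV. X i) \<subseteq> U"
    by (auto dest!: product_topology_open_contains_basis)
  define F where "F = {i. X i \<noteq> UNIV}"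
  have "\<forall>u\<in>F. \<exists>r>0. ball (T0 u) r \<subseteq> X u"
    using X(1,2) open_contains_ball by (simp add: PiE_iff) blast
  then obtain r where r: "\<And>u. u \<in> F \<Longrightarrow> r u > 0 \<and> ball (T0 u) (r u) \<subseteq> X u"
    by metis
  define \<delta> where "\<delta> = Min (insert 1 (r ` F))"
  have F: "finite F"
    using X(3) by (simp add: F_def)
  have \<delta>: "\<delta> > 0" "\<And>u. u \<in> F \<Longrightarrow> \<delta> \<le> r u"
    using r F by (auto simp: \<delta>_def)
  have "sot_nbhd B T0 F \<delta> \<subseteq> W"
  proof
    fix T assume T: "T \<in> sot_nbhd B T0 F \<delta>"
    have "T i \<in> X i" for i
    proof (cases "i \<in> F")
      case True
      then have "dist (T0 i) (T i) < r i"
        using T \<delta>(2)[OF True] by (auto simp: sot_nbhd_def dist_norm norm_minus_commute)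
      then show ?thesis
        using r[OF True] by auto
    qed (simp add: F_def)
    then show "T \<in> W"
      using X(4) U(2) T by (auto simp: sot_nbhd_def PiE_iff)
  qed
  then show ?thesis
    using that F \<delta> by blast
qed

lemma topspace_sot_on [simp]: "topspace (sot_on B) = B"
  by (simp add: sot_on_def topspace_pullback_topology)

lemma openin_sot_on_if_nbhds:
  assumes "W \<subseteq> B" "\<And>T0. T0 \<in> W \<Longrightarrow> \<exists>F \<delta>. finite F \<and> \<delta> > 0 \<and> sot_nbhd B T0 F \<delta> \<subseteq> W"
  shows "openin (sot_on B) W"
proof (subst openin_subopen, intro ballI)
  fix T0 assume "T0 \<in> W"
  then obtain F \<delta> where "finite F" "\<delta> > 0" "sot_nbhd B T0 F \<delta> \<subseteq> W"
    using assms(2) by blast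
  moreover have "T0 \<in> sot_nbhd B T0 F \<delta>"
    using assms(1) \<open>T0 \<in> W\<close> \<open>\<delta> > 0\<close> by (auto simp: sot_nbhd_def)
  ultimately show "\<exists>V. openin (sot_on B) V \<and> T0 \<in> V \<and> V \<subseteq> W"
    using openin_sot_nbhd[of F B T0 \<delta>] by blast
qed

text \<open>For a dense sequence d, sot_dist d metrizes the strong operator topology on norm-bounded
  sets of operators; truncating the k-th term at 2^-k makes the supremum finite.\<close>

definition sot_dist :: "(nat \<Rightarrow> 'a::real_normed_vector) \<Rightarrow> ('a \<Rightarrow>\<^sub>L 'a) \<Rightarrow> ('a \<Rightarrow>\<^sub>L 'a) \<Rightarrow> real" where
  "sot_dist d S T = (SUP k. min ((1/2)^k) (norm (S (d k) - T (d k))))"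

lemma sot_dist_ge:
  fixes S T :: "'a::real_normed_vector \<Rightarrow>\<^sub>L 'a"
  shows "min ((1/2)^k) (norm (S (d k) - T (d k))) \<le> sot_dist d S T"
proof -
  have "bdd_above (range (\<lambda>k. min ((1/2::real)^k) (norm (S (d k) - T (d k)))))"
    by (rule bdd_aboveI[where M=1]) (auto simp: min_le_iff_disj power_le_one)
  then show ?thesis
    unfolding sot_dist_def by (rule cSUP_upper[rotated]) simp
qed

lemma sot_dist_le:
  fixes S T :: "'a::real_normed_vector \<Rightarrow>\<^sub>L 'a"
  assumes "(\<And>k. min ((1/2)^k) (norm (S (d k) - T (d k))) \<le> r)"
  shows "sot_dist d S T \<le> r"
  using assms unfolding sot_dist_def by (intro cSUP_least) auto

lemma sot_dist_nonneg:
  fixes S T :: "'a::real_normed_vector \<Rightarrow>\<^sub>L 'a"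
  shows "0 \<le> sot_dist d S T"
proof -
  have "0 \<le> min ((1/2::real)^0) (norm (S (d 0) - T (d 0)))"
    by simp
  then show ?thesis
    using sot_dist_ge[of 0 S d T] by linarith
qed

lemma sot_dist_commute:
  fixes S T :: "'a::real_normed_vector \<Rightarrow>\<^sub>L 'a"
  shows "sot_dist d S T = sot_dist d T S"
  unfolding sot_dist_def by (simp add: norm_minus_commute)

lemma sot_dist_triangle:
  fixes S T U :: "'a::real_normed_vector \<Rightarrow>\<^sub>L 'a"
  shows "sot_dist d S U \<le> sot_dist d S T + sot_dist d T U"
proof (rule sot_dist_le)
  fix k
  have min_subadd: "min m c \<le> min m a + min m b" if "c \<le> a + b" "0 \<le> a" "0 \<le> b" "0 \<le> m"
    for m a b c :: real
    using that by (auto simp: min_def)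
  have "norm (S (d k) - U (d k)) \<le> norm (S (d k) - T (d k)) + norm (T (d k) - U (d k))"
    using norm_triangle_ineq[of "S (d k) - T (d k)" "T (d k) - U (d k)"] by simp
  then have "min ((1/2)^k) (norm (S (d k) - U (d k)))
      \<le> min ((1/2)^k) (norm (S (d k) - T (d k))) + min ((1/2)^k) (norm (T (d k) - U (d k)))"
    by (rule min_subadd) simp_all
  also have "\<dots> \<le> sot_dist d S T + sot_dist d T U"
    by (intro add_mono sot_dist_ge)
  finally show "min ((1/2)^k) (norm (S (d k) - U (d k))) \<le> sot_dist d S T + sot_dist d T U" .
qed

lemma sot_dist_self:
  fixes S T :: "'a::real_normed_vector \<Rightarrow>\<^sub>L 'a"
  shows "sot_dist d S S = 0"
  by (rule antisym[OF sot_dist_le sot_dist_nonneg]) simp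

lemma blinfun_eq_on_dense:
  assumes "closure (range d) = UNIV" "\<And>k. blinfun_apply S (d k) = blinfun_apply T (d k)"
  shows "S = T"
proof (rule blinfun_eqI)
  fix z
  have "closed {z. S z - T z = 0}"
    by (intro closed_Collect_eq continuous_intros)
  moreover have "range d \<subseteq> {z. S z - T z = 0}"
    using assms(2) by auto
  ultimately have "closure (range d) \<subseteq> {z. S z - T z = 0}"
    by (rule closure_minimal[rotated])
  then show "S z = T z"
    using assms(1) by auto
qed

lemma sot_dist_eq_0:
  fixes S T :: "'a::real_normed_vector \<Rightarrow>\<^sub>L 'a"
  assumes "closure (range d) = UNIV" "sot_dist d S T = 0"
  shows "S = T"
proof (rule blinfun_eq_on_dense[OF assms(1)])
  fix k
  have "min ((1/2::real)^k) (norm (S (d k) - T (d k))) \<le> 0"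
    using sot_dist_ge[of k S d T] assms(2) by simp
  moreover have "(0::real) < (1/2)^k"
    by simp
  ultimately show "S (d k) = T (d k)"
    by (simp add: min_le_iff_disj)
qed

lemma Metric_space_sot_dist: "closure (range d) = UNIV \<Longrightarrow> Metric_space M (sot_dist d)"
  by unfold_locales (auto simp: sot_dist_nonneg sot_dist_commute sot_dist_triangle sot_dist_self
      sot_dist_eq_0)

lemma sot_dist_le_if_initial_le:
  fixes S T :: "'a::real_normed_vector \<Rightarrow>\<^sub>L 'a"
  assumes "\<And>k. k < K \<Longrightarrow> norm (S (d k) - T (d k)) \<le> r" "(1/2)^K \<le> r"
  shows "sot_dist d S T \<le> r"
proof (rule sot_dist_le)
  fix k
  show "min ((1/2)^k) (norm (S (d k) - T (d k))) \<le> r"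
  proof (cases "k < K")
    case False
    then have "(1/2::real)^k \<le> (1/2)^K"
      by (intro power_decreasing) auto
    then show ?thesis
      using assms(2) by linarith
  qed (use assms(1) in fastforce)
qed

lemma norm_apply_less_if_sot_dist_less:
  fixes S T :: "'a::real_normed_vector \<Rightarrow>\<^sub>L 'a"
  assumes "sot_dist d S T < (1/2)^k * m" "m \<le> 1"
  shows "norm (S (d k) - T (d k)) < (1/2)^k * m"
proof -
  have "(1/2::real)^k * m \<le> (1/2)^k"
    using assms(2) by (simp add: mult_left_le)
  moreover have "min ((1/2)^k) (norm (S (d k) - T (d k))) < (1/2)^k * m"
    using sot_dist_ge[of k S d T] assms(1) by linarith
  ultimately show ?thesis
    by (auto simp: min_def split: if_splits)
qed

locale sot_ball = complex_space J for J :: "'a::{real_inner,complete_space} \<Rightarrow> 'a" +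
  fixes d :: "nat \<Rightarrow> 'a" and R :: real
  assumes dense: "closure (range d) = UNIV" and R_pos: "0 < R"
begin

sublocale M: Metric_space "op_ball J R" "sot_dist d"
  by (rule Metric_space_sot_dist[OF dense])

lemma dense_approx: "e > 0 \<Longrightarrow> \<exists>k. norm (z - d k) < e"
  using dense closure_approachable[of z "range d"] by (auto simp: dist_norm norm_minus_commute)

lemma norm_op_ball_apply_le: "T \<in> op_ball J R \<Longrightarrow> norm (T z) \<le> R * norm z"
  using norm_blinfun[of T z] by (simp add: op_ball_def) (meson mult_right_mono norm_ge_zero order_trans)

lemma norm_apply_diff_le:
  assumes "S \<in> op_ball J R" "T \<in> op_ball J R"
  shows "norm (S u - T u) \<le> 2 * R * norm (u - w) + norm (S w - T w)"
proof -
  have decomp: "S u - T u = S (u - w) + (S w - T w) + T (w - u)"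
    by (simp add: blinfun.diff_right)
  have "norm (S u - T u) \<le> norm (S (u - w)) + norm (S w - T w) + norm (T (w - u))"
    unfolding decomp using norm_triangle_ineq[of "S (u - w) + (S w - T w)" "T (w - u)"]
      norm_triangle_ineq[of "S (u - w)" "S w - T w"] by linarith
  also have "\<dots> \<le> R * norm (u - w) + norm (S w - T w) + R * norm (u - w)"
    using norm_op_ball_apply_le[OF assms(1), of "u - w"] norm_op_ball_apply_le[OF assms(2), of "w - u"]
    by (simp add: norm_minus_commute)
  finally show ?thesis
    by simp
qed

lemma sot_nbhd_subset_mball:
  assumes "T0 \<in> op_ball J R" "r > 0"
  obtains K where "sot_nbhd (op_ball J R) T0 (d ` {..<K}) (r/2) \<subseteq> M.mball T0 r"
proof -
  obtain K where K: "(1/2::real)^K < r/2"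
    using real_arch_pow_inv[of "r/2" "1/2"] assms(2) by auto
  have "sot_nbhd (op_ball J R) T0 (d ` {..<K}) (r/2) \<subseteq> M.mball T0 r"
  proof
    fix T assume T: "T \<in> sot_nbhd (op_ball J R) T0 (d ` {..<K}) (r/2)"
    have "sot_dist d T0 T \<le> r/2"
    proof (rule sot_dist_le_if_initial_le)
      fix k assume "k < K"
      then show "norm (T0 (d k) - T (d k)) \<le> r/2"
        using T by (auto simp: sot_nbhd_def norm_minus_commute intro: less_imp_le)
    qed (use K in simp)
    then show "T \<in> M.mball T0 r"
      using T assms by (auto simp: sot_nbhd_def)
  qed
  then show ?thesis
    using that by blast
qed

lemma mball_subset_sot_nbhd:
  assumes "T0 \<in> op_ball J R" "finite F" "\<delta> > 0"
  obtains r where "r > 0" "M.mball T0 r \<subseteq> sot_nbhd (op_ball J R) T0 F \<delta>"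
proof -
  obtain kk where kk: "\<And>u. u \<in> F \<Longrightarrow> norm (u - d (kk u)) < \<delta> / (4 * R)"
  proof -
    have "\<forall>u. \<exists>k. norm (u - d k) < \<delta> / (4 * R)"
      using dense_approx assms(3) R_pos by simp
    then show ?thesis
      using that by metis
  qed
  define K where "K = Max (insert 0 (kk ` F))"
  define m where "m = min 1 (\<delta>/2)"
  have m: "0 < m" "m \<le> 1" "m \<le> \<delta>/2"
    using assms(3) by (auto simp: m_def)
  define r where "r = (1/2::real)^K * m"
  have "M.mball T0 r \<subseteq> sot_nbhd (op_ball J R) T0 F \<delta>"
  proof
    fix T assume "T \<in> M.mball T0 r"
    then have T: "T \<in> op_ball J R" "sot_dist d T0 T < r"
      by auto
    have "norm (T u - T0 u) < \<delta>" if u: "u \<in> F" for u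
    proof -
      have "(1/2::real)^K \<le> (1/2)^(kk u)"
        using u assms(2) by (intro power_decreasing) (auto simp: K_def)
      then have "(1/2::real)^K * m \<le> (1/2)^(kk u) * m"
        using m by (intro mult_right_mono) auto
      then have "sot_dist d T0 T < (1/2)^(kk u) * m"
        using T(2) by (simp add: r_def)
      then have "norm (T0 (d (kk u)) - T (d (kk u))) < (1/2)^(kk u) * m"
        using m by (intro norm_apply_less_if_sot_dist_less) auto
      also have "\<dots> \<le> m"
        using m by (intro mult_left_le_one_le) (auto simp: power_le_one)
      finally have "norm (T (d (kk u)) - T0 (d (kk u))) < \<delta>/2"
        using m by (simp add: norm_minus_commute)
      moreover have "2 * R * norm (u - d (kk u)) < \<delta>/2"
        using kk[OF u] R_pos by (simp add: field_simps)
      ultimately show ?thesis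
        using norm_apply_diff_le[OF T(1) assms(1), of u "d (kk u)"] by linarith
    qed
    then show "T \<in> sot_nbhd (op_ball J R) T0 F \<delta>"
      using T(1) by (simp add: sot_nbhd_def)
  qed
  moreover have "r > 0"
    using m by (simp add: r_def)
  ultimately show ?thesis
    using that by blast
qed

lemma mtopology_eq_sot: "M.mtopology = sot_on (op_ball J R)"
proof (rule topology_eq[THEN iffD2], intro allI iffI)
  fix W assume W: "openin M.mtopology W"
  show "openin (sot_on (op_ball J R)) W"
  proof (rule openin_sot_on_if_nbhds)
    show "W \<subseteq> op_ball J R"
      using W M.openin_mtopology by blast
    fix T0 assume "T0 \<in> W"
    then obtain r where r: "r > 0" "M.mball T0 r \<subseteq> W" and T0: "T0 \<in> op_ball J R"
      using W M.openin_mtopology by blast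
    obtain K where "sot_nbhd (op_ball J R) T0 (d ` {..<K}) (r/2) \<subseteq> M.mball T0 r"
      using sot_nbhd_subset_mball[OF T0 r(1)] .
    then show "\<exists>F \<delta>. finite F \<and> \<delta> > 0 \<and> sot_nbhd (op_ball J R) T0 F \<delta> \<subseteq> W"
      using r by (intro exI[of _ "d ` {..<K}"] exI[of _ "r/2"]) auto
  qed
next
  fix W assume W: "openin (sot_on (op_ball J R)) W"
  have "\<exists>r>0. M.mball T0 r \<subseteq> W" if T0: "T0 \<in> W" for T0
  proof -
    obtain F \<delta> where F: "finite F" "\<delta> > 0" "sot_nbhd (op_ball J R) T0 F \<delta> \<subseteq> W"
      using sot_open_contains_nbhd[OF W T0] .
    moreover have "T0 \<in> op_ball J R"
      using openin_subset[OF W] T0 by auto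
    ultimately obtain r where "r > 0" "M.mball T0 r \<subseteq> sot_nbhd (op_ball J R) T0 F \<delta>"
      using mball_subset_sot_nbhd by blast
    then show ?thesis
      using F(3) by blast
  qed
  moreover have "W \<subseteq> op_ball J R"
    using openin_subset[OF W] by simp
  ultimately show "openin M.mtopology W"
    using M.openin_mtopology by blast
qed


lemma Cauchy_apply_if_MCauchy:
  assumes "M.MCauchy \<sigma>"
  shows "Cauchy (\<lambda>n. \<sigma> n z)"
proof -
  have \<sigma>: "\<sigma> n \<in> op_ball J R" for n
    using assms by (auto simp: M.MCauchy_def)
  have cauchy: "\<exists>N. \<forall>n\<ge>N. \<forall>n'\<ge>N. sot_dist d (\<sigma> n) (\<sigma> n') < \<epsilon>" if "\<epsilon> > 0" for \<epsilon>
    using assms that by (simp add: M.MCauchy_def)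
  have dense_Cauchy: "\<exists>N. \<forall>n n'. N \<le> n \<longrightarrow> N \<le> n' \<longrightarrow> norm (\<sigma> n (d k) - \<sigma> n' (d k)) < e"
    if e: "e > 0" for k e
  proof -
    define m where "m = min 1 e"
    have m: "0 < m" "m \<le> 1" "m \<le> e"
      using e by (auto simp: m_def)
    obtain N where N: "\<forall>n\<ge>N. \<forall>n'\<ge>N. sot_dist d (\<sigma> n) (\<sigma> n') < (1/2)^k * m"
      using cauchy[of "(1/2)^k * m"] m by auto
    have "norm (\<sigma> n (d k) - \<sigma> n' (d k)) < e" if "N \<le> n" "N \<le> n'" for n n'
    proof -
      have "norm (\<sigma> n (d k) - \<sigma> n' (d k)) < (1/2)^k * m"
        using N that m by (intro norm_apply_less_if_sot_dist_less) auto
      also have "\<dots> \<le> m"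
        using m by (intro mult_left_le_one_le) (auto simp: power_le_one)
      finally show ?thesis
        using m by linarith
    qed
    then show ?thesis
      by blast
  qed
  show ?thesis
    unfolding Cauchy_def
  proof (intro allI impI)
    fix e :: real assume e: "e > 0"
    obtain k where k: "norm (z - d k) < e / (4 * R)"
      using dense_approx[of "e / (4 * R)"] e R_pos by auto
    obtain N where N: "\<forall>n n'. N \<le> n \<longrightarrow> N \<le> n' \<longrightarrow> norm (\<sigma> n (d k) - \<sigma> n' (d k)) < e/2"
      using dense_Cauchy[of "e/2" k] e by auto
    have "dist (\<sigma> n z) (\<sigma> n' z) < e" if "N \<le> n" "N \<le> n'" for n n'
    proof -
      have "2 * R * norm (z - d k) < e/2"
        using k R_pos by (simp add: field_simps)
      moreover have "norm (\<sigma> n (d k) - \<sigma> n' (d k)) < e/2"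
        using N that by blast
      ultimately show ?thesis
        using norm_apply_diff_le[OF \<sigma> \<sigma>, of n z n' "d k"] by (simp add: dist_norm)
    qed
    then show "\<exists>N. \<forall>n\<ge>N. \<forall>n'\<ge>N. dist (\<sigma> n z) (\<sigma> n' z) < e"
      by blast
  qed
qed

lemma pointwise_limit_in_op_ball:
  assumes "\<And>n. \<sigma> n \<in> op_ball J R" "\<And>z. (\<lambda>n. \<sigma> n z) \<longlonglongrightarrow> L z"
  obtains T where "T \<in> op_ball J R" "blinfun_apply T = L"
proof -
  have "L (a + b) = L a + L b" for a b
    using tendsto_add[OF assms(2)[of a] assms(2)[of b]] assms(2)[of "a + b"]
    by (simp add: blinfun.add_right LIMSEQ_unique)
  moreover have "L (r *\<^sub>R a) = r *\<^sub>R L a" for r a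
    using tendsto_scaleR[OF tendsto_const assms(2)[of a], of r] assms(2)[of "r *\<^sub>R a"]
    by (simp add: blinfun.scaleR_right LIMSEQ_unique)
  moreover have L_norm: "norm (L z) \<le> R * norm z" for z
    using norm_op_ball_apply_le[OF assms(1)]
    by (intro tendsto_le[OF trivial_limit_sequentially tendsto_const tendsto_norm[OF assms(2)]]) simp
  ultimately have L: "bounded_linear L"
    by (intro bounded_linear_intro[where K=R]) (auto simp: mult.commute)
  have L_J: "L (J z) = J (L z)" for z
  proof -
    have "(\<lambda>n. J (\<sigma> n z)) \<longlonglongrightarrow> J (L z)"
      by (rule J.tendsto[OF assms(2)])
    moreover have "\<sigma> n (J z) = J (\<sigma> n z)" for n
      using assms(1)[of n] by (simp add: op_ball_def complex_ops_def)
    ultimately show ?thesis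
      using assms(2)[of "J z"] LIMSEQ_unique by fastforce
  qed
  have "norm (Blinfun L) \<le> R"
    using R_pos L_norm L by (intro norm_blinfun_bound) (auto simp: bounded_linear_Blinfun_apply)
  then show ?thesis
    using that[of "Blinfun L"] L L_J by (simp add: op_ball_def complex_ops_def bounded_linear_Blinfun_apply)
qed

lemma limitin_if_pointwise:
  assumes "\<And>n. \<sigma> n \<in> op_ball J R" "T \<in> op_ball J R" "\<And>z. (\<lambda>n. \<sigma> n z) \<longlonglongrightarrow> T z"
  shows "limitin M.mtopology \<sigma> T sequentially"
  unfolding M.limit_metric_sequentially
proof (intro conjI assms(2) allI impI)
  fix e :: real assume e: "e > 0"
  obtain K where K: "(1/2::real)^K < e/2"
    using real_arch_pow_inv[of "e/2" "1/2"] e by auto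
  have "\<forall>\<^sub>F n in sequentially. norm (\<sigma> n (d k) - T (d k)) < e/2" for k
  proof -
    have "(\<lambda>n. norm (\<sigma> n (d k) - T (d k))) \<longlonglongrightarrow> 0"
      using assms(3)[of "d k"] by (simp add: LIM_zero_iff tendsto_norm_zero_iff)
    then show ?thesis
      using e by (intro order_tendstoD(2)) auto
  qed
  then have "\<forall>\<^sub>F n in sequentially. \<forall>k\<in>{..<K}. norm (\<sigma> n (d k) - T (d k)) < e/2"
    by (intro eventually_ball_finite) auto
  then obtain N where N: "\<And>n k. n \<ge> N \<Longrightarrow> k < K \<Longrightarrow> norm (\<sigma> n (d k) - T (d k)) < e/2"
    by (auto simp: eventually_sequentially)
  have "sot_dist d (\<sigma> n) T \<le> e/2" if "n \<ge> N" for n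
    using N[OF that] K by (intro sot_dist_le_if_initial_le[of K]) (auto intro: less_imp_le)
  then have "\<sigma> n \<in> op_ball J R \<and> sot_dist d (\<sigma> n) T < e" if "n \<ge> N" for n
    using that assms(1) e by fastforce
  then show "\<exists>N. \<forall>n\<ge>N. \<sigma> n \<in> op_ball J R \<and> sot_dist d (\<sigma> n) T < e"
    by blast
qed

lemma mcomplete_sot_dist: "M.mcomplete"
  unfolding M.mcomplete_def
proof (intro allI impI)
  fix \<sigma> :: "nat \<Rightarrow> 'a \<Rightarrow>\<^sub>L 'a"
  assume \<sigma>: "M.MCauchy \<sigma>"
  define L where "L z = lim (\<lambda>n. \<sigma> n z)" for z
  have L: "(\<lambda>n. \<sigma> n z) \<longlonglongrightarrow> L z" for z
    using Cauchy_apply_if_MCauchy[OF \<sigma>, of z] by (simp add: L_def Cauchy_convergent_iff convergent_LIMSEQ_iff)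
  have \<sigma>_ball: "\<sigma> n \<in> op_ball J R" for n
    using \<sigma> by (auto simp: M.MCauchy_def)
  obtain T where T: "T \<in> op_ball J R" "blinfun_apply T = L"
    using pointwise_limit_in_op_ball[OF \<sigma>_ball L] .
  then have "limitin M.mtopology \<sigma> T sequentially"
    using L by (intro limitin_if_pointwise[OF \<sigma>_ball]) auto
  then show "\<exists>T. limitin M.mtopology \<sigma> T sequentially"
    by blast
qed

lemma completely_metrizable_sot_op_ball: "completely_metrizable_space (sot_on (op_ball J R))"
  unfolding completely_metrizable_space_def
  using M.Metric_space_axioms mcomplete_sot_dist mtopology_eq_sot by metis

end

lemma closure_range_from_nat_into:
  fixes D :: "'a::topological_space set"
  assumes "countable D" "closure D = UNIV"
  shows "closure (range (from_nat_into D)) = UNIV"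
proof -
  have "D \<noteq> {}"
    using assms(2) by auto
  then show ?thesis
    using assms by (simp add: range_from_nat_into)
qed

section \<open>Genericity of hypercyclicity\<close>

lemma norm_iterate_diff_le:
  fixes T T0 :: "'a::real_normed_vector \<Rightarrow>\<^sub>L 'a"
  assumes "norm T \<le> R" "1 \<le> R"
    and "\<And>i. i < n \<Longrightarrow> norm (T ((blinfun_apply T0 ^^ i) x) - T0 ((blinfun_apply T0 ^^ i) x)) \<le> \<delta>"
  shows "norm ((blinfun_apply T ^^ n) x - (blinfun_apply T0 ^^ n) x) \<le> real n * R ^ n * \<delta>"
  using assms(3)
proof (induction n)
  case (Suc n)
  let ?a = "(blinfun_apply T ^^ n) x" and ?b = "(blinfun_apply T0 ^^ n) x"
  have IH: "norm (?a - ?b) \<le> real n * R ^ n * \<delta>"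
    using Suc by auto
  have step: "norm (T ?b - T0 ?b) \<le> \<delta>"
    using Suc.prems by auto
  then have "0 \<le> \<delta>"
    using norm_ge_zero order_trans by blast
  then have "\<delta> \<le> R ^ Suc n * \<delta>"
    using one_le_power[OF assms(2), of "Suc n"] by (simp add: mult_le_cancel_right1)
  have decomp: "(blinfun_apply T ^^ Suc n) x - (blinfun_apply T0 ^^ Suc n) x = T (?a - ?b) + (T ?b - T0 ?b)"
    by (simp add: blinfun.diff_right)
  have "norm ((blinfun_apply T ^^ Suc n) x - (blinfun_apply T0 ^^ Suc n) x)
      \<le> norm (T (?a - ?b)) + norm (T ?b - T0 ?b)"
    unfolding decomp by (rule norm_triangle_ineq)
  also have "norm (T (?a - ?b)) \<le> R * (real n * R ^ n * \<delta>)"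
    using norm_blinfun[of T "?a - ?b"] assms(1,2) IH
    by (meson mult_mono norm_ge_zero order_trans)
  finally show ?case
    using step \<open>\<delta> \<le> R ^ Suc n * \<delta>\<close> by (simp add: algebra_simps)
qed simp

definition orbit_meets_ball :: "('a::real_inner \<Rightarrow> 'a) \<Rightarrow> real \<Rightarrow> 'a \<Rightarrow> 'a \<Rightarrow> real \<Rightarrow> ('a \<Rightarrow>\<^sub>L 'a) set" where
  "orbit_meets_ball J R x y r = {T \<in> op_ball J R. \<exists>n. norm ((blinfun_apply T ^^ n) x - y) < r}"

lemma openin_orbit_meets_ball:
  assumes "1 \<le> R"
  shows "openin (sot_on (op_ball J R)) (orbit_meets_ball J R x y r)"
proof (rule openin_sot_on_if_nbhds)
  show "orbit_meets_ball J R x y r \<subseteq> op_ball J R"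
    by (auto simp: orbit_meets_ball_def)
  fix T0 assume "T0 \<in> orbit_meets_ball J R x y r"
  then obtain n where T0: "T0 \<in> op_ball J R" "norm ((blinfun_apply T0 ^^ n) x - y) < r"
    by (auto simp: orbit_meets_ball_def)
  define \<rho> where "\<rho> = norm ((blinfun_apply T0 ^^ n) x - y)"
  define \<delta> where "\<delta> = (r - \<rho>) / (2 * ((real n + 1) * R ^ n))"
  have \<delta>: "\<delta> > 0"
    using T0(2) assms by (simp add: \<delta>_def \<rho>_def)
  define F where "F = (\<lambda>i. (blinfun_apply T0 ^^ i) x) ` {..<n}"
  have "sot_nbhd (op_ball J R) T0 F \<delta> \<subseteq> orbit_meets_ball J R x y r"
  proof
    fix T assume T: "T \<in> sot_nbhd (op_ball J R) T0 F \<delta>"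
    have "norm ((blinfun_apply T ^^ n) x - (blinfun_apply T0 ^^ n) x) \<le> real n * R ^ n * \<delta>"
      using T assms by (intro norm_iterate_diff_le) (auto simp: sot_nbhd_def op_ball_def F_def less_imp_le)
    also have "\<dots> \<le> (real n + 1) * R ^ n * \<delta>"
      using \<delta> assms by (intro mult_right_mono) auto
    also have "\<dots> < r - \<rho>"
      using T0(2) assms by (simp add: \<delta>_def \<rho>_def)
    finally have "norm ((blinfun_apply T ^^ n) x - y) < r"
      using norm_triangle_ineq[of "(blinfun_apply T ^^ n) x - (blinfun_apply T0 ^^ n) x" "(blinfun_apply T0 ^^ n) x - y"] by (simp add: \<rho>_def)
    then show "T \<in> orbit_meets_ball J R x y r"
      using T by (auto simp: orbit_meets_ball_def sot_nbhd_def)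
  qed
  then show "\<exists>F \<delta>. finite F \<and> \<delta> > 0 \<and> sot_nbhd (op_ball J R) T0 F \<delta> \<subseteq> orbit_meets_ball J R x y r"
    using \<delta> by (auto simp: F_def)
qed

lemma (in complex_space) dense_orbit_meets_ball:
  assumes "\<forall>B::'a set. finite B \<longrightarrow> span B \<noteq> UNIV" "R > 1" "x \<noteq> 0" "r > 0"
  shows "(sot_on (op_ball J R)) closure_of (orbit_meets_ball J R x y r) = op_ball J R"
proof -
  have "orbit_meets_ball J R x y r \<inter> W \<noteq> {}" if W: "openin (sot_on (op_ball J R)) W" "T0 \<in> W" for W T0
  proof -
    obtain F \<delta> where F: "finite F" "\<delta> > 0" "sot_nbhd (op_ball J R) T0 F \<delta> \<subseteq> W"
      using sot_open_contains_nbhd[OF W] .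
    have "T0 \<in> op_ball J R"
      using openin_subset[OF W(1)] W(2) by auto
    then obtain T where T: "T \<in> op_ball J R" "\<exists>n. (blinfun_apply T ^^ n) x = y"
        "\<forall>u\<in>F. norm (T u - T0 u) < \<delta>"
      using exists_near_operator_with_orbit_through[OF assms(1-3) _ F(1,2)] by blast
    obtain n where "(blinfun_apply T ^^ n) x = y"
      using T(2) by blast
    then have "T \<in> orbit_meets_ball J R x y r"
      using T(1) assms(4) by (auto simp: orbit_meets_ball_def intro!: exI[of _ n])
    moreover have "T \<in> W"
      using F(3) T(1,3) by (auto simp: sot_nbhd_def)
    ultimately show ?thesis
      by blast
  qed
  then have "(sot_on (op_ball J R)) closure_of (orbit_meets_ball J R x y r) = topspace (sot_on (op_ball J R))"
    unfolding dense_intersects_open by blast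
  then show ?thesis
    by simp
qed

lemma hypercyclic_iff_orbit_near_dense:
  assumes "closure (range d) = UNIV"
  shows "hypercyclic T x \<longleftrightarrow> (\<forall>k j. \<exists>n. norm ((blinfun_apply T ^^ n) x - d k) < 1 / real (Suc j))"
proof
  assume hc: "hypercyclic T x"
  show "\<forall>k j. \<exists>n. norm ((blinfun_apply T ^^ n) x - d k) < 1 / real (Suc j)"
  proof (intro allI)
    fix k j
    have "d k \<in> closure (range (\<lambda>n. (blinfun_apply T ^^ n) x))"
      using hc by (simp add: hypercyclic_def)
    moreover have "(0::real) < 1 / real (Suc j)"
      by simp
    ultimately obtain y where "y \<in> range (\<lambda>n. (blinfun_apply T ^^ n) x)" "dist y (d k) < 1 / real (Suc j)"
      unfolding closure_approachable by blast
    then show "\<exists>n. norm ((blinfun_apply T ^^ n) x - d k) < 1 / real (Suc j)"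
      by (auto simp: dist_norm)
  qed
next
  assume near: "\<forall>k j. \<exists>n. norm ((blinfun_apply T ^^ n) x - d k) < 1 / real (Suc j)"
  have "z \<in> closure (range (\<lambda>n. (blinfun_apply T ^^ n) x))" for z
    unfolding closure_approachable
  proof (intro allI impI)
    fix e :: real assume e: "e > 0"
    have "z \<in> closure (range d)"
      using assms by simp
    then obtain y where "y \<in> range d" "dist y z < e/2"
      using e unfolding closure_approachable by (meson half_gt_zero)
    then obtain k where k: "dist (d k) z < e/2"
      by blast
    obtain j where "inverse (real (Suc j)) < e/2"
      using reals_Archimedean[of "e/2"] e by auto
    moreover obtain n where "norm ((blinfun_apply T ^^ n) x - d k) < 1 / real (Suc j)"
      using near by blast
    ultimately have "dist ((blinfun_apply T ^^ n) x) (d k) < e/2"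
      by (simp add: dist_norm inverse_eq_divide)
    then have "dist ((blinfun_apply T ^^ n) x) z < e"
      using dist_triangle[of "(blinfun_apply T ^^ n) x" z "d k"] k by linarith
    then show "\<exists>y\<in>range (\<lambda>n. (blinfun_apply T ^^ n) x). dist y z < e"
      by blast
  qed
  then show "hypercyclic T x"
    by (auto simp: hypercyclic_def)
qed

theorem proposition7:
  fixes J :: "'a::{real_inner,complete_space} \<Rightarrow> 'a" and R :: real and x :: 'a
  assumes "complex_structure J"
    and "\<exists>D. countable D \<and> closure D = (UNIV :: 'a set)"
    and "\<forall>B::'a set. finite B \<longrightarrow> span B \<noteq> UNIV"
    and "R > 1"
    and "x \<noteq> 0"
  shows "gdelta_in (sot_on (op_ball J R)) (L_HC J R x)
       \<and> (sot_on (op_ball J R)) closure_of (L_HC J R x) = op_ball J R"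
proof -
  obtain D :: "'a set" where "countable D" "closure D = UNIV"
    using assms(2) by blast
  then interpret sot_ball J "from_nat_into D" R
    using assms(1,4) by unfold_locales (auto simp: closure_range_from_nat_into)
  let ?d = "from_nat_into D"
  define \<G> where "\<G> = (\<lambda>(k, j). orbit_meets_ball J R x (?d k) (1 / real (Suc j))) ` UNIV"
  have L_HC: "L_HC J R x = \<Inter>\<G>" "L_HC J R x \<subseteq> op_ball J R"
    by (auto simp: L_HC_def \<G>_def orbit_meets_ball_def hypercyclic_iff_orbit_near_dense[OF dense])
  have open_\<G>: "openin (sot_on (op_ball J R)) U" if "U \<in> \<G>" for U
    using that assms(4) by (auto simp: \<G>_def intro!: openin_orbit_meets_ball)
  have dense_\<G>: "(sot_on (op_ball J R)) closure_of U = op_ball J R" if "U \<in> \<G>" for U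
    using that dense_orbit_meets_ball[OF assms(3-5)] by (auto simp: \<G>_def)
  have "countable \<G>"
    by (simp add: \<G>_def)
  have "gdelta_in (sot_on (op_ball J R)) (L_HC J R x)"
    unfolding gdelta_in_alt intersection_of_def using \<open>countable \<G>\<close> open_\<G> L_HC by auto
  moreover have "(sot_on (op_ball J R)) closure_of (L_HC J R x) = op_ball J R"
    using Baire_category[OF disjI1[OF completely_metrizable_sot_op_ball] \<open>countable \<G>\<close>]
      open_\<G> dense_\<G> by (simp add: L_HC)
  ultimately show ?thesis
    by simp
qed

end
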